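(* Every $T_1$-space with a regular base at non-isolated points has a point-countable base.
   Context: $I(X)$ is the set of isolated points. A base $\mathcal{B}$ is regular at $x$ if for every neighborhood $U$ of $x$ there is an open $V$ with $x\in V\subset U$ such that $\{B\in\mathcal{B}: B\cap V\neq\emptyset,\ B\not\subset U\}$ is finite; a regular base at non-isolated points is regular at every $x\in X\setminus I(X)$. A base is point-countable if each point lies in at most countably many of its members. *)

theory Defs
  imports "HOL-Analysis.Analysis"
begin

text \<open>A family of sets is a base of the topology X (library idiom: every open set is a union
of members, and members are open).\<close>
definition base_of :: "'a topology \<Rightarrow> 'a set set \<Rightarrow> bool" where
  "base_of X \<B> \<longleftrightarrow> openin X = arbitrary union_of (\<lambda>W. W \<in> \<B>)"

definition isolated_points :: "'a topology \<Rightarrow> 'a set" where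
  "isolated_points X = {x \<in> topspace X. openin X {x}}"

definition nbhd_of :: "'a topology \<Rightarrow> 'a \<Rightarrow> 'a set \<Rightarrow> bool" where
  "nbhd_of X x U \<longleftrightarrow> U \<subseteq> topspace X \<and> (\<exists>W. openin X W \<and> x \<in> W \<and> W \<subseteq> U)"

definition regular_at :: "'a topology \<Rightarrow> 'a set set \<Rightarrow> 'a \<Rightarrow> bool" where
  "regular_at X \<B> x \<longleftrightarrow>
     (\<forall>U. nbhd_of X x U \<longrightarrow>
        (\<exists>V. openin X V \<and> x \<in> V \<and> V \<subseteq> U \<and>
             finite {B \<in> \<B>. B \<inter> V \<noteq> {} \<and> \<not> B \<subseteq> U}))"

definition regular_base_at_nonisolated :: "'a topology \<Rightarrow> 'a set set \<Rightarrow> bool" where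
  "regular_base_at_nonisolated X \<B> \<longleftrightarrow>
     base_of X \<B> \<and> (\<forall>x \<in> topspace X - isolated_points X. regular_at X \<B> x)"

definition point_countable :: "'a topology \<Rightarrow> 'a set set \<Rightarrow> bool" where
  "point_countable X \<B> \<longleftrightarrow> (\<forall>x \<in> topspace X. countable {B \<in> \<B>. x \<in> B})"

end

theory Submission
  imports Defs
begin

(* Idea: shrink each member B of the base to its "regular kernel" ker B, the
   union of all open V inside B which meet only finitely many members of the
   base not contained in B.  Regularity at a non-isolated point x of B says
   precisely that x lies in ker B, so the kernels together with the singletons
   of the isolated points still form a base.  For a fixed point p, the members
   B with p in ker B form a family in which each member has only finitely many
   members not below it (they all meet a witnessing V around p); such a family
   of sets is countable by a purely order-theoretic argument. *)

text \<open>A family in a partial order in which every element has only finitely many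
  members of the family not below it is countable.  (An uncountable such family
  would contain a countably infinite subfamily A together with an element below
  all of A; infinitely many members of A would then also lie below that element,
  contradicting antisymmetry.)\<close>
lemma countable_if_finitely_many_not_below:
  fixes E :: "'b::order set"
  assumes fin: "\<And>b. b \<in> E \<Longrightarrow> finite {c \<in> E. \<not> c \<le> b}"
  shows "countable E"
proof (rule ccontr)
  assume unc: "\<not> countable E"
  then obtain A where A: "A \<subseteq> E" "countable A" "infinite A"
    using infinite_countable_subset' countable_finite by blast
  define S where "S = (\<Union>b\<in>A. {c \<in> E. \<not> c \<le> b})"
  have "countable (S \<union> A)"
    unfolding S_def using A fin by (auto intro: countable_finite)
  then obtain c where c: "c \<in> E" "c \<notin> S" "c \<notin> A"
    using unc countable_subset[of E "S \<union> A"] by blast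
  have c_below: "c \<le> b" if "b \<in> A" for b
    using c that unfolding S_def by blast
  have "finite {b \<in> A. \<not> b \<le> c}"
    by (rule rev_finite_subset[OF fin[OF c(1)]]) (use A(1) in blast)
  then have "infinite {b \<in> A. b \<le> c}"
    using A(3) infinite_super[of A "{b \<in> A. b \<le> c} \<union> {b \<in> A. \<not> b \<le> c}"] by auto
  then obtain b where "b \<in> A" "b \<le> c"
    using not_finite_existsD by blast
  moreover have "c \<le> b" using c_below \<open>b \<in> A\<close> .
  ultimately have "b = c" by auto
  then show False using c(3) \<open>b \<in> A\<close> by simp
qed

lemma base_of_iff:
  "base_of X \<C> \<longleftrightarrow>
     (\<forall>W\<in>\<C>. openin X W) \<and> (\<forall>U x. openin X U \<and> x \<in> U \<longrightarrow> (\<exists>W\<in>\<C>. x \<in> W \<and> W \<subseteq> U))"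
  unfolding base_of_def openin_topology_base_unique by blast

definition regular_kernel :: "'a topology \<Rightarrow> 'a set set \<Rightarrow> 'a set \<Rightarrow> 'a set" where
  "regular_kernel X \<B> B =
     \<Union>{V. openin X V \<and> V \<subseteq> B \<and> finite {B' \<in> \<B>. B' \<inter> V \<noteq> {} \<and> \<not> B' \<subseteq> B}}"

lemma regular_kernel_subset: "regular_kernel X \<B> B \<subseteq> B"
  unfolding regular_kernel_def by (rule Union_least) simp

lemma openin_regular_kernel: "openin X (regular_kernel X \<B> B)"
  unfolding regular_kernel_def by (rule openin_Union) simp

lemma regular_kernel_contains:
  assumes "openin X B" "x \<in> B" "regular_at X \<B> x"
  shows "x \<in> regular_kernel X \<B> B"
proof -
  have "nbhd_of X x B"
    unfolding nbhd_of_def using assms(1,2) openin_subset by blast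
  then obtain V where "openin X V" "x \<in> V" "V \<subseteq> B"
      "finite {B' \<in> \<B>. B' \<inter> V \<noteq> {} \<and> \<not> B' \<subseteq> B}"
    using assms(3) unfolding regular_at_def by blast
  then show ?thesis unfolding regular_kernel_def by (intro UnionI[of V]) simp_all
qed

text \<open>Each point lies in the kernels of only countably many members of \<B>: any
  two members whose kernels contain p meet around p, so the cofiniteness
  hypothesis of the order-theoretic lemma is supplied by the kernel's witnesses.\<close>
lemma countable_regular_kernels_containing:
  "countable {B \<in> \<B>. p \<in> regular_kernel X \<B> B}" (is "countable ?E")
proof (rule countable_if_finitely_many_not_below)
  fix B assume "B \<in> ?E"
  then have "p \<in> regular_kernel X \<B> B" by simp
  then obtain V where V: "p \<in> V" "finite {B' \<in> \<B>. B' \<inter> V \<noteq> {} \<and> \<not> B' \<subseteq> B}"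
    unfolding regular_kernel_def by (elim UnionE) simp
  have "C \<inter> V \<noteq> {}" if "C \<in> ?E" for C
    using that V(1) regular_kernel_subset[of X \<B> C] by blast
  then have "{C \<in> ?E. \<not> C \<subseteq> B} \<subseteq> {B' \<in> \<B>. B' \<inter> V \<noteq> {} \<and> \<not> B' \<subseteq> B}"
    by blast
  then show "finite {C \<in> ?E. \<not> C \<subseteq> B}"
    using V(2) finite_subset by blast
qed

definition kernel_base :: "'a topology \<Rightarrow> 'a set set \<Rightarrow> 'a set set" where
  "kernel_base X \<B> = (\<lambda>x. {x}) ` isolated_points X \<union> regular_kernel X \<B> ` \<B>"

text \<open>For a base regular at non-isolated points, the kernel base is again a base:
  a non-isolated point of a member B lies in the kernel of B.\<close>
lemma base_of_kernel_base:
  assumes "regular_base_at_nonisolated X \<B>"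
  shows "base_of X (kernel_base X \<B>)"
proof -
  have B_base: "base_of X \<B>"
    and reg: "\<And>x. x \<in> topspace X - isolated_points X \<Longrightarrow> regular_at X \<B> x"
    using assms unfolding regular_base_at_nonisolated_def by auto
  have B_open: "\<And>B. B \<in> \<B> \<Longrightarrow> openin X B"
    and B_fine: "\<And>U x. openin X U \<Longrightarrow> x \<in> U \<Longrightarrow> \<exists>B\<in>\<B>. x \<in> B \<and> B \<subseteq> U"
    using B_base unfolding base_of_iff by blast+
  have C_open: "openin X W" if "W \<in> kernel_base X \<B>" for W
    using that openin_regular_kernel unfolding kernel_base_def isolated_points_def by auto
  have C_fine: "\<exists>W\<in>kernel_base X \<B>. x \<in> W \<and> W \<subseteq> U" if U: "openin X U" "x \<in> U" for U x
  proof (cases "x \<in> isolated_points X")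
    case True
    then show ?thesis using U(2) unfolding kernel_base_def by blast
  next
    case False
    obtain B where B: "B \<in> \<B>" "x \<in> B" "B \<subseteq> U"
      using B_fine[OF U] by blast
    have "x \<in> topspace X - isolated_points X"
      using False U openin_subset by blast
    then have "x \<in> regular_kernel X \<B> B"
      using regular_kernel_contains[OF B_open[OF B(1)] B(2)] reg by blast
    moreover have "regular_kernel X \<B> B \<subseteq> U"
      using regular_kernel_subset[of X \<B> B] B(3) by (rule order_trans)
    ultimately show ?thesis using B(1) unfolding kernel_base_def by blast
  qed
  show ?thesis unfolding base_of_iff by (simp add: C_open C_fine)
qed

text \<open>The new base is point-countable: p lies in at most one singleton and in
  countably many kernels.\<close>
lemma point_countable_kernel_base:
  "point_countable X (kernel_base X \<B>)"
  unfolding point_countable_def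
proof
  fix p
  let ?E = "{B \<in> \<B>. p \<in> regular_kernel X \<B> B}"
  have "{C \<in> kernel_base X \<B>. p \<in> C} \<subseteq> insert {p} (regular_kernel X \<B> ` ?E)"
    unfolding kernel_base_def by auto
  moreover have "countable (insert {p} (regular_kernel X \<B> ` ?E))"
    by (intro countable_insert countable_image countable_regular_kernels_containing)
  ultimately show "countable {C \<in> kernel_base X \<B>. p \<in> C}"
    using countable_subset by blast
qed

theorem mainTheorem17:
  fixes X :: "'a topology" and \<B> :: "'a set set"
  assumes "t1_space X"
    and "regular_base_at_nonisolated X \<B>"
  shows "\<exists>\<C>. base_of X \<C> \<and> point_countable X \<C>"
proof (intro exI conjI)
  show "base_of X (kernel_base X \<B>)"
    using assms(2) by (rule base_of_kernel_base)
  show "point_countable X (kernel_base X \<B>)"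
    by (rule point_countable_kernel_base)
qed

end
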